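(* For probability measures $\mu$ on $\mathbb R$ with finite first moment set $a(x,\mu)=x\,I_{\{x\ge0\}}$ (the indicator function of $\{x\ge0\}$ times $x$), $b(x,\mu)=\int_{\mathbb R}(2y-x)\,\mu(dy)$, and $L_\mu u=a(x,\mu)u''+b(x,\mu)u'$. (a) For every compactly supported probability measure $\mu$, with $W(x,\mu)=\frac12\int_{\mathbb R}(x-2y)^2\,\mu(dy)$, one has $$\int_{\mathbb R}L_\mu W(x,\mu)\,\mu(dx)\le\frac12-\frac12\int_{\mathbb R}x^2\,\mu(dx),$$ where $L_\mu$ acts on $x\mapsto W(x,\mu)$. (b) There is no function $V\in C^2(\mathbb R)$ with $V\ge0$ and $V(x)\to+\infty$ as $|x|\to\infty$, together with positive numbers $C,\Lambda$, such that $\int_{\mathbb R}L_\mu V\,d\mu\le C-\Lambda\int_{\mathbb R}V\,d\mu$ for every compactly supported probability measure $\mu$ on $\mathbb R$. *)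

theory Defs
  imports "HOL-Probability.Probability"
begin

definition prob_on_real :: "real measure \<Rightarrow> bool" where
  "prob_on_real \<mu> \<longleftrightarrow> prob_space \<mu> \<and> sets \<mu> = sets borel"

definition compactly_supported :: "real measure \<Rightarrow> bool" where
  "compactly_supported \<mu> \<longleftrightarrow> (\<exists>K. compact K \<and> (AE x in \<mu>. x \<in> K))"

definition a_coef :: "real \<Rightarrow> real measure \<Rightarrow> real" where
  "a_coef x \<mu> = x * indicator {0..} x"

definition b_coef :: "real \<Rightarrow> real measure \<Rightarrow> real" where
  "b_coef x \<mu> = (\<integral>y. (2 * y - x) \<partial>\<mu>)"

definition L_op :: "real measure \<Rightarrow> (real \<Rightarrow> real) \<Rightarrow> real \<Rightarrow> real" where
  "L_op \<mu> u x = a_coef x \<mu> * deriv (deriv u) x + b_coef x \<mu> * deriv u x"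

definition W_fun :: "real \<Rightarrow> real measure \<Rightarrow> real" where
  "W_fun x \<mu> = 1/2 * (\<integral>y. (x - 2 * y)^2 \<partial>\<mu>)"

definition C2_real :: "(real \<Rightarrow> real) \<Rightarrow> bool" where
  "C2_real V \<longleftrightarrow> (\<forall>x. V differentiable at x) \<and> (\<forall>x. deriv V differentiable at x)
     \<and> continuous_on UNIV (deriv (deriv V))"

end

theory Submission
  imports Defs
begin

(*
  (a) For compactly supported mu with mean m and second moment m2, W(., mu) is the quadratic
  (z^2 - 4 m z + 4 m2)/2, so L_mu W (x) = max x 0 - (x - 2m)^2, and integrating gives
  int L_mu W dmu = int max x 0 dmu - m2; the bound follows from max x 0 <= (1 + x^2)/2.

  (b) Testing the inequality on the Dirac mass at m <= 0, where the diffusion coefficient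
  vanishes and the drift equals m, gives m V'(m) <= C - Lambda V(m). Hence V'(m) > 0 at every
  m < 0 with V(m) > C/Lambda. But V tends to infinity at -infinity, so on an interval [x2, x1]
  of the negative axis with V(x2) > V(x1) > C/Lambda the maximum of V is attained at some
  m < x1, where V'(m) <= 0.
*)

lemma integrable_continuous_compactly_supported:
  fixes f :: "real \<Rightarrow> real"
  assumes "finite_measure \<mu>" "sets \<mu> = sets borel" "compactly_supported \<mu>"
    and "continuous_on UNIV f"
  shows "integrable \<mu> f"
proof -
  interpret finite_measure \<mu> by fact
  obtain K where K: "compact K" "AE x in \<mu>. x \<in> K"
    using assms(3) unfolding compactly_supported_def by blast
  have "compact (f ` K)"
    by (rule compact_continuous_image[OF continuous_on_subset[OF assms(4)] K(1)]) simp
  then obtain B where "\<forall>y \<in> f ` K. norm y \<le> B"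
    using compact_imp_bounded bounded_iff by metis
  with K(2) have "AE x in \<mu>. norm (f x) \<le> B" by (auto elim: AE_mp)
  moreover have "f \<in> borel_measurable \<mu>"
    using borel_measurable_continuous_onI[OF assms(4)] measurable_cong_sets[OF assms(2) refl]
    by blast
  ultimately show ?thesis by (intro integrable_const_bound)
qed

lemma integrable_continuous_prob_on_real:
  fixes f :: "real \<Rightarrow> real"
  assumes "prob_on_real \<mu>" "compactly_supported \<mu>" "continuous_on UNIV f"
  shows "integrable \<mu> f"
  using assms unfolding prob_on_real_def
  by (intro integrable_continuous_compactly_supported) (auto intro: prob_space.finite_measure)

lemma a_coef_eq_max: "a_coef x \<mu> = max x 0"
  by (simp add: a_coef_def indicator_def)

lemma b_coef_eq_mean:
  assumes "prob_space \<mu>" "integrable \<mu> (\<lambda>y. y)"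
  shows "b_coef x \<mu> = 2 * (\<integral>y. y \<partial>\<mu>) - x"
proof -
  interpret prob_space \<mu> by fact
  show ?thesis using assms(2) by (simp add: b_coef_def prob_space)
qed

lemma W_fun_eq_moments:
  assumes "prob_space \<mu>" "integrable \<mu> (\<lambda>y. y)" "integrable \<mu> (\<lambda>y. y\<^sup>2)"
  shows "W_fun z \<mu> = 1/2 * (z\<^sup>2 - 4 * z * (\<integral>y. y \<partial>\<mu>) + 4 * (\<integral>y. y\<^sup>2 \<partial>\<mu>))"
proof -
  interpret prob_space \<mu> by fact
  have "(\<lambda>y. (z - 2 * y)\<^sup>2) = (\<lambda>y. z\<^sup>2 - (4 * z) * y + 4 * y\<^sup>2)"
    by (auto simp: power2_eq_square algebra_simps)
  then show ?thesis
    using assms(2,3) by (simp add: W_fun_def prob_space)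
qed

lemma integral_L_op_W_fun:
  assumes "prob_on_real \<mu>" "compactly_supported \<mu>"
  shows "(\<integral>x. L_op \<mu> (\<lambda>z. W_fun z \<mu>) x \<partial>\<mu>) = (\<integral>x. max x 0 \<partial>\<mu>) - (\<integral>x. x\<^sup>2 \<partial>\<mu>)"
proof -
  interpret prob_space \<mu> using assms(1) unfolding prob_on_real_def by simp
  note integrable = integrable_continuous_prob_on_real[OF assms]
  have i1: "integrable \<mu> (\<lambda>x. x)" and i2: "integrable \<mu> (\<lambda>x. x\<^sup>2)"
    by (rule integrable, intro continuous_intros)+
  define m where "m = (\<integral>y. y \<partial>\<mu>)"
  define m2 where "m2 = (\<integral>y. y\<^sup>2 \<partial>\<mu>)"
  have "((\<lambda>z. W_fun z \<mu>) has_real_derivative z - 2 * m) (at z)" for z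
    unfolding W_fun_eq_moments[OF prob_space_axioms i1 i2, folded m_def m2_def]
    by (auto intro!: derivative_eq_intros simp: algebra_simps)
  then have d1: "deriv (\<lambda>z. W_fun z \<mu>) = (\<lambda>z. z - 2 * m)"
    by (auto intro: DERIV_imp_deriv)
  have d2: "deriv (deriv (\<lambda>z. W_fun z \<mu>)) = (\<lambda>z. 1)"
    unfolding d1 by (auto intro!: DERIV_imp_deriv derivative_eq_intros)
  have L: "L_op \<mu> (\<lambda>z. W_fun z \<mu>) x = max x 0 - (x - 2 * m)\<^sup>2" for x
    by (simp add: L_op_def a_coef_eq_max b_coef_eq_mean[OF prob_space_axioms i1] d1 d2
        m_def power2_eq_square algebra_simps)
  have "(\<integral>x. (x - 2 * m)\<^sup>2 \<partial>\<mu>) = (\<integral>x. x\<^sup>2 - 4 * m * x + 4 * m\<^sup>2 \<partial>\<mu>)"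
    by (simp add: power2_eq_square algebra_simps)
  also have "\<dots> = m2"
    using i1 i2 by (simp add: m_def m2_def prob_space power2_eq_square)
  finally have second_moment: "(\<integral>x. (x - 2 * m)\<^sup>2 \<partial>\<mu>) = m2" .
  have "integrable \<mu> (\<lambda>x. max x 0)" "integrable \<mu> (\<lambda>x. (x - 2 * m)\<^sup>2)"
    by (rule integrable, intro continuous_intros)+
  then have "(\<integral>x. L_op \<mu> (\<lambda>z. W_fun z \<mu>) x \<partial>\<mu>)
      = (\<integral>x. max x 0 \<partial>\<mu>) - (\<integral>x. (x - 2 * m)\<^sup>2 \<partial>\<mu>)"
    unfolding L by simp
  then show ?thesis
    unfolding second_moment m2_def .
qed

lemma integral_L_op_W_fun_le:
  assumes "prob_on_real \<mu>" "compactly_supported \<mu>"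
  shows "(\<integral>x. L_op \<mu> (\<lambda>z. W_fun z \<mu>) x \<partial>\<mu>) \<le> 1/2 - 1/2 * (\<integral>x. x\<^sup>2 \<partial>\<mu>)"
proof -
  interpret prob_space \<mu> using assms(1) unfolding prob_on_real_def by simp
  note integrable = integrable_continuous_prob_on_real[OF assms]
  have "max x 0 \<le> 1/2 + 1/2 * x\<^sup>2" for x :: real
    using sum_squares_ge_zero[of "x - 1" 0] by (auto simp: power2_eq_square algebra_simps)
  moreover have "integrable \<mu> (\<lambda>x. max x 0)" "integrable \<mu> (\<lambda>x. 1/2 + 1/2 * x\<^sup>2)"
    by (rule integrable, intro continuous_intros)+
  ultimately have "(\<integral>x. max x 0 \<partial>\<mu>) \<le> (\<integral>x. 1/2 + 1/2 * x\<^sup>2 \<partial>\<mu>)"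
    by (intro integral_mono)
  also have "\<dots> = 1/2 + 1/2 * (\<integral>x. x\<^sup>2 \<partial>\<mu>)"
    using integrable[of "\<lambda>x. x\<^sup>2"] by (simp add: prob_space continuous_on_power)
  finally show ?thesis
    unfolding integral_L_op_W_fun[OF assms] by simp
qed

lemma prob_on_real_return: "prob_on_real (return borel m)"
  by (simp add: prob_on_real_def prob_space_return)

lemma compactly_supported_return: "compactly_supported (return borel m)"
  unfolding compactly_supported_def by (intro exI[of _ "{m}"]) (simp add: AE_return)

lemma C2_real_has_real_derivative:
  "C2_real V \<Longrightarrow> (V has_real_derivative deriv V x) (at x)"
  by (simp add: C2_real_def DERIV_deriv_iff_real_differentiable)

lemma C2_real_continuous_on:
  assumes "C2_real V"
  shows "continuous_on UNIV V" "continuous_on UNIV (deriv V)"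
    "continuous_on UNIV (deriv (deriv V))"
  using assms unfolding C2_real_def
  by (auto intro!: continuous_at_imp_continuous_on differentiable_imp_continuous_within)

lemma integral_L_op_return:
  assumes "C2_real V" "m \<le> 0"
  shows "(\<integral>x. L_op (return borel m) V x \<partial>return borel m) = m * deriv V m"
proof -
  let ?M = "return borel m"
  have "integrable ?M (\<lambda>y. y)"
    by (rule integrable_continuous_prob_on_real[OF prob_on_real_return compactly_supported_return])
      (rule continuous_on_id)
  moreover have "(\<integral>y. y \<partial>?M) = m"
    by (rule integral_return) simp_all
  ultimately have "b_coef x ?M = 2 * m - x" for x
    using b_coef_eq_mean[OF prob_space_return] by simp
  then have L: "L_op ?M V = (\<lambda>x. max x 0 * deriv (deriv V) x + (2 * m - x) * deriv V x)"
    by (simp add: L_op_def a_coef_eq_max fun_eq_iff)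
  have "continuous_on UNIV (L_op ?M V)"
    unfolding L using C2_real_continuous_on[OF assms(1)] by (intro continuous_intros)
  then have "(\<integral>x. L_op ?M V x \<partial>?M) = L_op ?M V m"
    by (intro integral_return borel_measurable_continuous_onI) simp_all
  with assms(2) show ?thesis
    unfolding L by simp
qed

lemma exists_deriv_nonpos_above_left_value:
  fixes f :: "real \<Rightarrow> real"
  assumes "a < b" "f b < f a" "\<And>x. (f has_real_derivative deriv f x) (at x)"
  shows "\<exists>m \<in> {a..<b}. f a \<le> f m \<and> deriv f m \<le> 0"
proof -
  have "continuous_on {a..b} f"
    using assms(3) by (meson DERIV_isCont continuous_at_imp_continuous_on)
  then obtain m where m: "m \<in> {a..b}" and max: "\<And>y. y \<in> {a..b} \<Longrightarrow> f y \<le> f m"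
    using continuous_attains_sup[of "{a..b}" f] assms(1) by auto
  have "f a \<le> f m"
    using max assms(1) by simp
  with assms(2) have "m < b"
    using m by (cases "m = b") auto
  moreover have "deriv f m \<le> 0"
  proof (rule ccontr)
    assume "\<not> deriv f m \<le> 0"
    then obtain d where "d > 0" and inc: "\<And>h. 0 < h \<Longrightarrow> h < d \<Longrightarrow> f m < f (m + h)"
      using DERIV_pos_inc_right[OF assms(3)] by (metis not_le)
    define h where "h = min (d / 2) (b - m)"
    have "0 < h" "h < d"
      using \<open>d > 0\<close> \<open>m < b\<close> by (auto simp: h_def)
    then have "f m < f (m + h)"
      by (rule inc)
    moreover have "m + h \<in> {a..b}"
      using m \<open>0 < h\<close> by (auto simp: h_def)
    ultimately show False
      using max by fastforce
  qed
  ultimately show ?thesis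
    using m \<open>f a \<le> f m\<close> by auto
qed

lemma no_Lyapunov_function:
  assumes V: "C2_real V" "filterlim V at_top at_bot" and "\<Lambda> > 0"
    and bound: "\<And>\<mu>. prob_on_real \<mu> \<Longrightarrow> compactly_supported \<mu> \<Longrightarrow>
      (\<integral>x. L_op \<mu> V x \<partial>\<mu>) \<le> C - \<Lambda> * (\<integral>x. V x \<partial>\<mu>)"
  shows False
proof -
  have dirac: "m * deriv V m \<le> C - \<Lambda> * V m" if "m \<le> 0" for m
  proof -
    have "(\<integral>x. V x \<partial>return borel m) = V m"
      using C2_real_continuous_on(1)[OF V(1)]
      by (intro integral_return borel_measurable_continuous_onI) auto
    then show ?thesis
      using bound[OF prob_on_real_return[of m] compactly_supported_return[of m]]
      by (simp add: integral_L_op_return[OF V(1) that])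
  qed
  have deriv_pos: "0 < deriv V m" if "m < 0" "C / \<Lambda> < V m" for m
  proof -
    have "C < \<Lambda> * V m"
      using that(2) \<open>\<Lambda> > 0\<close> by (simp add: field_simps)
    with dirac[of m] that(1) have "m * deriv V m < 0"
      by simp
    with that(1) show ?thesis
      by (simp add: mult_less_0_iff)
  qed
  have "\<forall>\<^sub>F x in at_bot. C / \<Lambda> + 1 \<le> V x"
    using V(2) by (simp add: filterlim_at_top)
  then obtain R where R: "\<And>x. x \<le> R \<Longrightarrow> C / \<Lambda> + 1 \<le> V x"
    by (auto simp: eventually_at_bot_linorder)
  define x1 where "x1 = min R (-1)"
  have "\<forall>\<^sub>F x in at_bot. V x1 + 1 \<le> V x"
    using V(2) by (simp add: filterlim_at_top)
  then obtain R' where R': "\<And>x. x \<le> R' \<Longrightarrow> V x1 + 1 \<le> V x"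
    by (auto simp: eventually_at_bot_linorder)
  define x2 where "x2 = min R' (x1 - 1)"
  have "x2 < x1" "V x1 < V x2"
    using R'[of x2] by (auto simp: x2_def)
  then obtain m where m: "m \<in> {x2..<x1}" "V x2 \<le> V m" "deriv V m \<le> 0"
    using exists_deriv_nonpos_above_left_value[OF _ _ C2_real_has_real_derivative[OF V(1)]]
    by blast
  have "m < 0"
    using m(1) by (auto simp: x1_def)
  have "x2 \<le> R"
    by (simp add: x2_def x1_def)
  then have "C / \<Lambda> < V m"
    using R[of x2] m(2) by linarith
  with deriv_pos[OF \<open>m < 0\<close>] m(3) show False
    by simp
qed

theorem mainTheorem12:
  shows "(\<forall>\<mu>. prob_on_real \<mu> \<and> compactly_supported \<mu> \<longrightarrow>
            (\<integral>x. L_op \<mu> (\<lambda>z. W_fun z \<mu>) x \<partial>\<mu>) \<le> 1/2 - 1/2 * (\<integral>x. x^2 \<partial>\<mu>))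
     \<and> \<not> (\<exists>(V::real \<Rightarrow> real) (C::real) (\<Lambda>::real).
            C2_real V \<and> (\<forall>x. V x \<ge> 0) \<and> filterlim V at_top at_infinity \<and> C > 0 \<and> \<Lambda> > 0 \<and>
            (\<forall>\<mu>. prob_on_real \<mu> \<and> compactly_supported \<mu> \<longrightarrow>
               (\<integral>x. L_op \<mu> V x \<partial>\<mu>) \<le> C - \<Lambda> * (\<integral>x. V x \<partial>\<mu>)))"
proof (intro conjI allI impI notI)
  fix \<mu> :: "real measure"
  assume "prob_on_real \<mu> \<and> compactly_supported \<mu>"
  then show "(\<integral>x. L_op \<mu> (\<lambda>z. W_fun z \<mu>) x \<partial>\<mu>) \<le> 1/2 - 1/2 * (\<integral>x. x^2 \<partial>\<mu>)"
    using integral_L_op_W_fun_le by simp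
next
  assume "\<exists>(V::real \<Rightarrow> real) (C::real) (\<Lambda>::real).
            C2_real V \<and> (\<forall>x. V x \<ge> 0) \<and> filterlim V at_top at_infinity \<and> C > 0 \<and> \<Lambda> > 0 \<and>
            (\<forall>\<mu>. prob_on_real \<mu> \<and> compactly_supported \<mu> \<longrightarrow>
               (\<integral>x. L_op \<mu> V x \<partial>\<mu>) \<le> C - \<Lambda> * (\<integral>x. V x \<partial>\<mu>))"
  then obtain V C \<Lambda> where V: "C2_real V" "filterlim V at_top at_infinity" and "\<Lambda> > 0"
    and bound: "\<forall>\<mu>. prob_on_real \<mu> \<and> compactly_supported \<mu> \<longrightarrow>
      (\<integral>x. L_op \<mu> V x \<partial>\<mu>) \<le> C - \<Lambda> * (\<integral>x. V x \<partial>\<mu>)"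
    by blast
  have "filterlim V at_top at_bot"
    using V(2) order.refl at_bot_le_at_infinity by (rule filterlim_mono)
  from no_Lyapunov_function[OF V(1) this \<open>\<Lambda> > 0\<close>] bound show False
    by blast
qed

end
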